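(* Let $r\ge6$ and $G\in\mathcal{G}(r,r)$. Then any two distinct configurations in $G$ are disjoint.
   Context: $\mathcal{G}(\Delta,\omega)$ denotes the class of finite simple graphs $G$ with maximum degree $\Delta(G)\le\Delta$ and clique number $\omega(G)\le\omega$. For $G\in\mathcal{G}(r,r)$, a configuration in $G$ is a set $C\subseteq V(G)$ with $|C|=r+1$ such that the induced subgraph $G[C]$ is a complete graph with exactly two edges missing. *)

theory Defs
  imports Main
begin

definition simple_graph :: "'a set \<Rightarrow> ('a \<Rightarrow> 'a \<Rightarrow> bool) \<Rightarrow> bool" where
  "simple_graph V E \<longleftrightarrow> finite V \<and> (\<forall>x y. E x y \<longrightarrow> x \<in> V \<and> y \<in> V)
     \<and> (\<forall>x y. E x y \<longrightarrow> E y x) \<and> (\<forall>x. \<not> E x x)"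

definition degree :: "'a set \<Rightarrow> ('a \<Rightarrow> 'a \<Rightarrow> bool) \<Rightarrow> 'a \<Rightarrow> nat" where
  "degree V E v = card {u \<in> V. E v u}"

definition is_clique :: "'a set \<Rightarrow> ('a \<Rightarrow> 'a \<Rightarrow> bool) \<Rightarrow> 'a set \<Rightarrow> bool" where
  "is_clique V E K \<longleftrightarrow> K \<subseteq> V \<and> (\<forall>x\<in>K. \<forall>y\<in>K. x \<noteq> y \<longrightarrow> E x y)"

definition in_class_G :: "nat \<Rightarrow> nat \<Rightarrow> 'a set \<Rightarrow> ('a \<Rightarrow> 'a \<Rightarrow> bool) \<Rightarrow> bool" where
  "in_class_G \<Delta> \<omega> V E \<longleftrightarrow> simple_graph V E
     \<and> (\<forall>v\<in>V. degree V E v \<le> \<Delta>)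
     \<and> (\<forall>K. is_clique V E K \<longrightarrow> card K \<le> \<omega>)"

definition missing_edges :: "('a \<Rightarrow> 'a \<Rightarrow> bool) \<Rightarrow> 'a set \<Rightarrow> 'a set set" where
  "missing_edges E C = {{x, y} | x y. x \<in> C \<and> y \<in> C \<and> x \<noteq> y \<and> \<not> E x y}"

definition configuration :: "nat \<Rightarrow> 'a set \<Rightarrow> ('a \<Rightarrow> 'a \<Rightarrow> bool) \<Rightarrow> 'a set \<Rightarrow> bool" where
  "configuration r V E C \<longleftrightarrow> C \<subseteq> V \<and> card C = r + 1 \<and> card (missing_edges E C) = 2"

end

theory Submission
  imports Defs
begin

text \<open>Let \<open>m\<^sub>C(u)\<close> be the number of non-neighbours of \<open>u\<close> inside a configuration \<open>C\<close>.
  Double counting the two missing edges gives \<open>\<Sum>\<^sub>u m\<^sub>C(u) = 4\<close>. If \<open>u\<close> lies in two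
  configurations \<open>C\<close> and \<open>D\<close>, all of \<open>(C \<union> D) - {u}\<close> except \<open>m\<^sub>C(u) + m\<^sub>D(u)\<close> vertices are
  neighbours of \<open>u\<close>, so the degree bound \<open>r\<close> forces \<open>|D - C| \<le> m\<^sub>C(u) + m\<^sub>D(u)\<close>. Summing over
  \<open>C \<inter> D\<close> gives \<open>|C \<inter> D| \<cdot> |D - C| \<le> 8\<close>, which for \<open>r \<ge> 6\<close> leaves only \<open>C - D = {c}\<close>,
  \<open>D - C = {d}\<close>. A neighbour of \<open>d\<close> in \<open>C \<inter> D\<close> adjacent to all of \<open>C\<close> would have degree
  \<open>r + 1\<close>, so it has a non-neighbour in \<open>C\<close>; counting these against \<open>\<Sum>\<^sub>u m\<^sub>C(u) = 4\<close>
  from both sides yields \<open>2r \<le> 8\<close>.\<close>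

definition non_neighbours :: "('a \<Rightarrow> 'a \<Rightarrow> bool) \<Rightarrow> 'a set \<Rightarrow> 'a \<Rightarrow> 'a set" where
  "non_neighbours E X u = {w \<in> X. w \<noteq> u \<and> \<not> E u w}"

lemma non_neighbours_subset: "non_neighbours E X u \<subseteq> X - {u}"
  unfolding non_neighbours_def by auto

lemma non_neighbours_Un: "non_neighbours E (X \<union> Y) u = non_neighbours E X u \<union> non_neighbours E Y u"
  unfolding non_neighbours_def by auto

lemma finite_non_neighbours: "finite X \<Longrightarrow> finite (non_neighbours E X u)"
  using non_neighbours_subset by (rule finite_subset) simp

lemma finite_missing_edges: "finite X \<Longrightarrow> finite (missing_edges E X)"
  by (rule finite_subset[of _ "Pow X"]) (auto simp: missing_edges_def)

lemma card_non_neighbours_le_card_missing_edges: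
  assumes "finite X" and "u \<in> X"
  shows "card (non_neighbours E X u) \<le> card (missing_edges E X)"
proof (rule card_inj_on_le)
  show "inj_on (\<lambda>w. {u, w}) (non_neighbours E X u)"
    by (auto simp: inj_on_def non_neighbours_def doubleton_eq_iff)
  show "(\<lambda>w. {u, w}) ` non_neighbours E X u \<subseteq> missing_edges E X"
    using \<open>u \<in> X\<close> unfolding non_neighbours_def missing_edges_def by blast
qed (rule finite_missing_edges[OF \<open>finite X\<close>])

text \<open>Each missing edge \<open>{a, b}\<close> is counted at most twice, as \<open>(a, b)\<close> and as \<open>(b, a)\<close>.\<close>

lemma sum_card_non_neighbours_le:
  assumes "finite X"
  shows "(\<Sum>u\<in>X. card (non_neighbours E X u)) \<le> 2 * card (missing_edges E X)"
proof -
  let ?M = "missing_edges E X"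
  let ?ordered = "\<lambda>e. {(x, y) \<in> e \<times> e. x \<noteq> y}"
  have fin: "finite ?M" using finite_missing_edges[OF assms] .
  have "(\<Sum>u\<in>X. card (non_neighbours E X u)) = card (Sigma X (non_neighbours E X))"
    using assms by (simp add: finite_non_neighbours)
  also have "\<dots> \<le> card (\<Union>e\<in>?M. ?ordered e)"
  proof (rule card_mono)
    have "(\<Union>e\<in>?M. ?ordered e) \<subseteq> X \<times> X"
      unfolding missing_edges_def by blast
    then show "finite (\<Union>e\<in>?M. ?ordered e)"
      using assms by (blast intro: finite_subset)
    show "Sigma X (non_neighbours E X) \<subseteq> (\<Union>e\<in>?M. ?ordered e)"
      unfolding non_neighbours_def missing_edges_def by blast
  qed
  also have "\<dots> \<le> (\<Sum>e\<in>?M. card (?ordered e))"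
    using fin by (rule card_UN_le)
  also have "\<dots> \<le> (\<Sum>e\<in>?M. 2)"
  proof (rule sum_mono)
    fix e assume "e \<in> ?M"
    then obtain a b where "e = {a, b}" "a \<noteq> b" unfolding missing_edges_def by blast
    then have "?ordered e = {(a, b), (b, a)}" by auto
    then show "card (?ordered e) \<le> 2" by (simp add: card_insert_le_m1)
  qed
  finally show ?thesis by simp
qed

lemma card_Diff_singleton_le_degree:
  assumes "finite V" and "X \<subseteq> V"
  shows "card (X - {u}) \<le> degree V E u + card (non_neighbours E X u)"
proof -
  have "X - {u} \<subseteq> {w \<in> V. E u w} \<union> non_neighbours E X u"
    using \<open>X \<subseteq> V\<close> unfolding non_neighbours_def by auto
  then have "card (X - {u}) \<le> card ({w \<in> V. E u w} \<union> non_neighbours E X u)"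
    using assms by (intro card_mono) (auto intro: finite_subset finite_non_neighbours)
  also have "\<dots> \<le> degree V E u + card (non_neighbours E X u)"
    unfolding degree_def by (rule card_Un_le)
  finally show ?thesis .
qed

lemma configuration_finite: "configuration r V E C \<Longrightarrow> finite C"
  unfolding configuration_def by (intro card_ge_0_finite) simp

lemma configuration_card_non_neighbours_le:
  "configuration r V E C \<Longrightarrow> u \<in> C \<Longrightarrow> card (non_neighbours E C u) \<le> 2"
  using card_non_neighbours_le_card_missing_edges configuration_finite
  unfolding configuration_def by metis

lemma configuration_sum_card_non_neighbours:
  "configuration r V E C \<Longrightarrow> (\<Sum>u\<in>C. card (non_neighbours E C u)) \<le> 4"
  using sum_card_non_neighbours_le[of C E] configuration_finite
  unfolding configuration_def by fastforce

context
  fixes r :: nat and V :: "'a set" and E :: "'a \<Rightarrow> 'a \<Rightarrow> bool"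
  assumes finite_V: "finite V" and degree_le: "\<forall>v\<in>V. degree V E v \<le> r"
begin

lemma card_Diff_configurations_le_non_neighbours:
  assumes C: "configuration r V E C" and D: "configuration r V E D" and "u \<in> C"
  shows "card (D - C) \<le> card (non_neighbours E C u) + card (non_neighbours E D u)"
proof -
  have CV: "C \<subseteq> V" and DV: "D \<subseteq> V" using C D by (auto simp: configuration_def)
  have "C \<union> D - {u} = (C - {u}) \<union> (D - C)" using \<open>u \<in> C\<close> by auto
  then have "card (C \<union> D - {u}) = card (C - {u}) + card (D - C)"
    using configuration_finite[OF C] configuration_finite[OF D]
    by (simp add: card_Un_disjoint[of "C - {u}" "D - C"] Int_Diff disjoint_iff)
  also have "\<dots> = r + card (D - C)"
    using C \<open>u \<in> C\<close> configuration_finite[OF C] by (simp add: configuration_def)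
  finally have "r + card (D - C) \<le> degree V E u + card (non_neighbours E (C \<union> D) u)"
    using card_Diff_singleton_le_degree[OF finite_V, of "C \<union> D" u E] CV DV by simp
  also have "\<dots> \<le> r + card (non_neighbours E C u) + card (non_neighbours E D u)"
    using degree_le \<open>u \<in> C\<close> CV card_Un_le unfolding non_neighbours_Un
    by (metis add.assoc add_mono subsetD)
  finally show ?thesis by simp
qed

lemma configuration_non_neighbours_nonempty:
  assumes C: "configuration r V E C" and "u \<in> C" and "d \<in> V - C" and "E u d"
  shows "non_neighbours E C u \<noteq> {}"
proof -
  have "insert d C - {u} = insert d (C - {u})" using assms by auto
  then have "r + 1 = card (insert d C - {u})"
    using C assms configuration_finite[OF C] by (simp add: configuration_def)
  also have "\<dots> \<le> degree V E u + card (non_neighbours E (insert d C) u)"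
    using C \<open>d \<in> V - C\<close> by (intro card_Diff_singleton_le_degree finite_V) (auto simp: configuration_def)
  also have "non_neighbours E (insert d C) u = non_neighbours E C u"
    using \<open>E u d\<close> by (auto simp: non_neighbours_def)
  finally show ?thesis
    using degree_le \<open>u \<in> C\<close> C by (fastforce simp: configuration_def)
qed

lemma configurations_overlap_card_Diff_le_one:
  assumes "6 \<le> r" and C: "configuration r V E C" and D: "configuration r V E D"
    and "C \<inter> D \<noteq> {}"
  shows "card (D - C) \<le> 1"
proof -
  let ?S = "C \<inter> D" and ?j = "card (D - C)"
  let ?m = "\<lambda>X u. card (non_neighbours E X u)"
  have fin: "finite C" "finite D" using C D by (simp_all add: configuration_finite)
  have "card ?S * ?j = (\<Sum>u\<in>?S. ?j)" by simp
  also have "\<dots> \<le> (\<Sum>u\<in>?S. ?m C u + ?m D u)"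
    by (intro sum_mono card_Diff_configurations_le_non_neighbours[OF C D]) simp
  also have "\<dots> \<le> (\<Sum>u\<in>C. ?m C u) + (\<Sum>u\<in>D. ?m D u)"
    unfolding sum.distrib using fin by (intro add_mono sum_mono2) auto
  also have "\<dots> \<le> 8"
    using configuration_sum_card_non_neighbours[OF C] configuration_sum_card_non_neighbours[OF D]
    by simp
  finally have product: "card ?S * ?j \<le> 8" .
  obtain u where "u \<in> ?S" using \<open>C \<inter> D \<noteq> {}\<close> by blast
  then have "?j \<le> 4"
    using card_Diff_configurations_le_non_neighbours[OF C D, of u]
      configuration_card_non_neighbours_le[OF C, of u] configuration_card_non_neighbours_le[OF D, of u]
    by simp
  moreover have "card ?S + ?j = r + 1"
    using D card_Int_Diff[OF fin(2), of C] by (simp add: Int_commute configuration_def)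
  ultimately consider "?j \<le> 1" | "?j = 2" | "?j = 3" | "?j = 4"
    by linarith
  then show ?thesis using product \<open>6 \<le> r\<close> \<open>card ?S + ?j = r + 1\<close> by cases simp_all
qed

lemma configurations_exchange_bound:
  assumes sym: "\<And>x y. E x y \<Longrightarrow> E y x"
    and C: "configuration r V E C" and D: "configuration r V E D"
    and "C - D = {c}" and "D - C = {d}"
  shows "r + card (non_neighbours E C c) \<le> 4 + card (non_neighbours E D d)"
proof -
  let ?S = "C \<inter> D" and ?m = "\<lambda>u. card (non_neighbours E C u)"
  let ?T = "{u \<in> ?S. E d u}"
  have fin: "finite C" "finite ?S" using C by (simp_all add: configuration_finite)
  have C_eq: "C = insert c ?S" and "c \<notin> ?S" using \<open>C - D = {c}\<close> by auto
  have d: "d \<in> V - C" using D \<open>D - C = {d}\<close> by (auto simp: configuration_def)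
  have "r = card ?S"
    using C card_Int_Diff[OF fin(1), of D] \<open>C - D = {c}\<close> by (simp add: configuration_def)
  also have "\<dots> \<le> card (?T \<union> non_neighbours E D d)"
    using fin configuration_finite[OF D] d
    by (intro card_mono) (auto simp: non_neighbours_def finite_non_neighbours)
  also have "\<dots> \<le> card ?T + card (non_neighbours E D d)" by (rule card_Un_le)
  finally have r_le: "r \<le> card ?T + card (non_neighbours E D d)" .
  have "card ?T = (\<Sum>u\<in>?T. 1)" by simp
  also have "\<dots> \<le> (\<Sum>u\<in>?T. ?m u)"
  proof (rule sum_mono)
    fix u assume "u \<in> ?T"
    then show "1 \<le> ?m u"
      using configuration_non_neighbours_nonempty[OF C _ d, of u] sym fin(1)
      by (auto simp: Suc_le_eq card_gt_0_iff finite_non_neighbours)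
  qed
  also have "\<dots> \<le> (\<Sum>u\<in>?S. ?m u)" using fin by (intro sum_mono2) auto
  also have "\<dots> + ?m c = (\<Sum>u\<in>C. ?m u)"
    using fin \<open>c \<notin> ?S\<close> by (subst C_eq) simp
  also have "\<dots> \<le> 4" by (rule configuration_sum_card_non_neighbours[OF C])
  finally show ?thesis using r_le by linarith
qed

end

theorem mainTheorem9:
  fixes r :: nat and V :: "'a set" and E :: "'a \<Rightarrow> 'a \<Rightarrow> bool" and C D :: "'a set"
  assumes "r \<ge> 6"
    and "in_class_G r r V E"
    and "configuration r V E C"
    and "configuration r V E D"
    and "C \<noteq> D"
  shows "C \<inter> D = {}"
proof (rule ccontr)
  assume "C \<inter> D \<noteq> {}"
  note C = assms(3) and D = assms(4)
  have V: "finite V" "\<forall>v\<in>V. degree V E v \<le> r" and sym: "\<And>x y. E x y \<Longrightarrow> E y x"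
    using assms(2) by (auto simp: in_class_G_def simple_graph_def)
  have fin: "finite C" "finite D" using C D by (simp_all add: configuration_finite)
  have "card (D - C) = 1"
  proof -
    have "card (D - C) \<le> 1"
      using configurations_overlap_card_Diff_le_one[OF V assms(1) C D \<open>C \<inter> D \<noteq> {}\<close>] .
    moreover have "\<not> D \<subseteq> C"
      using card_subset_eq[OF fin(1), of D] C D assms(5) by (auto simp: configuration_def)
    ultimately show ?thesis using fin(2) by (simp add: le_Suc_eq)
  qed
  moreover have "card (C - D) = card (D - C)"
    using C D card_Int_Diff[OF fin(1), of D] card_Int_Diff[OF fin(2), of C]
    by (simp add: Int_commute configuration_def)
  ultimately obtain c d where "C - D = {c}" and "D - C = {d}"
    by (metis One_nat_def card_1_singleton_iff)
  then have "r + card (non_neighbours E C c) \<le> 4 + card (non_neighbours E D d)"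
    and "r + card (non_neighbours E D d) \<le> 4 + card (non_neighbours E C c)"
    using configurations_exchange_bound[OF V sym C D] configurations_exchange_bound[OF V sym D C]
    by simp_all
  then show False using assms(1) by linarith
qed

end
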